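(* Let $Q$ be a based quantale with base locale $Q_0$. Every equivariant support $\varsigma$ on $Q$ is stable, i.e. $\varsigma(xy)\le\varsigma(x)$ for all $x,y\in Q$.
   Context: For a locale $A$, an $A$-$A$-bimodule is a sup-lattice $M$ with actions $a\triangleright m$, $m\triangleleft a$ preserving joins in each variable, with $1_A\triangleright m=m$, $(a\wedge b)\triangleright m=a\triangleright(b\triangleright m)$, $m\triangleleft1_A=m$, $m\triangleleft(a\wedge b)=(m\triangleleft a)\triangleleft b$, $(a\triangleright m)\triangleleft b=a\triangleright(m\triangleleft b)$. An $A$-$A$-quantale is such a $Q$ with associative join-preserving multiplication and $(a\triangleright x)y=a\triangleright(xy)$, $(x\triangleleft a)y=x(a\triangleright y)$, $(xy)\triangleleft a=x(y\triangleleft a)$; involutive if there is a join-preserving $x\mapsto x^*$ with $x^{**}=x$, $(xy)^*=y^*x^*$, $(a\triangleright(x\triangleleft b))^*=b\triangleright(x^*\triangleleft a)$. A based quantale is an involutive $Q_0$-$Q_0$-quantale for a locale $Q_0$. A support is a join-preserving $\varsigma:Q\to Q_0$ with $\varsigma(1_Q)=1_{Q_0}$, $\varsigma(x)\triangleright y\le xx^*y$, $\varsigma(x)\triangleright x=x$; it is equivariant if $\varsigma(a\triangleright x)=a\wedge\varsigma(x)$ for all $a\in Q_0$, $x\in Q$. *)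

theory Defs
  imports Main
begin

text \<open>A locale (frame): a complete lattice in which binary meets distribute over arbitrary joins.
  The top element plays the role of 1.\<close>
definition is_locale :: "('a::complete_lattice) itself \<Rightarrow> bool" where
  "is_locale _ \<longleftrightarrow> (\<forall>(a::'a) S. inf a (Sup S) = (SUP s\<in>S. inf a s))"

definition bimodule ::
  "('a::complete_lattice \<Rightarrow> 'm::complete_lattice \<Rightarrow> 'm) \<Rightarrow> ('m \<Rightarrow> 'a \<Rightarrow> 'm) \<Rightarrow> bool" where
  "bimodule lact ract \<longleftrightarrow>
     (\<forall>S m. lact (Sup S) m = (SUP a\<in>S. lact a m)) \<and>
     (\<forall>a M. lact a (Sup M) = (SUP m\<in>M. lact a m)) \<and>
     (\<forall>M a. ract (Sup M) a = (SUP m\<in>M. ract m a)) \<and>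
     (\<forall>m S. ract m (Sup S) = (SUP a\<in>S. ract m a)) \<and>
     (\<forall>m. lact top m = m) \<and>
     (\<forall>a b m. lact (inf a b) m = lact a (lact b m)) \<and>
     (\<forall>m. ract m top = m) \<and>
     (\<forall>a b m. ract m (inf a b) = ract (ract m a) b) \<and>
     (\<forall>a b m. ract (lact a m) b = lact a (ract m b))"

definition bi_quantale ::
  "('a::complete_lattice \<Rightarrow> 'q::complete_lattice \<Rightarrow> 'q) \<Rightarrow> ('q \<Rightarrow> 'a \<Rightarrow> 'q) \<Rightarrow> ('q \<Rightarrow> 'q \<Rightarrow> 'q) \<Rightarrow> bool" where
  "bi_quantale lact ract mult \<longleftrightarrow>
     bimodule lact ract \<and>
     (\<forall>x y z. mult (mult x y) z = mult x (mult y z)) \<and>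
     (\<forall>X y. mult (Sup X) y = (SUP x\<in>X. mult x y)) \<and>
     (\<forall>x Y. mult x (Sup Y) = (SUP y\<in>Y. mult x y)) \<and>
     (\<forall>a x y. mult (lact a x) y = lact a (mult x y)) \<and>
     (\<forall>a x y. mult (ract x a) y = mult x (lact a y)) \<and>
     (\<forall>a x y. ract (mult x y) a = mult x (ract y a))"

definition involutive_bi_quantale ::
  "('a::complete_lattice \<Rightarrow> 'q::complete_lattice \<Rightarrow> 'q) \<Rightarrow> ('q \<Rightarrow> 'a \<Rightarrow> 'q) \<Rightarrow> ('q \<Rightarrow> 'q \<Rightarrow> 'q)
     \<Rightarrow> ('q \<Rightarrow> 'q) \<Rightarrow> bool" where
  "involutive_bi_quantale lact ract mult star \<longleftrightarrow>
     bi_quantale lact ract mult \<and>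
     (\<forall>X. star (Sup X) = (SUP x\<in>X. star x)) \<and>
     (\<forall>x. star (star x) = x) \<and>
     (\<forall>x y. star (mult x y) = mult (star y) (star x)) \<and>
     (\<forall>a b x. star (lact a (ract x b)) = lact b (ract (star x) a))"

definition based_quantale ::
  "('a::complete_lattice \<Rightarrow> 'q::complete_lattice \<Rightarrow> 'q) \<Rightarrow> ('q \<Rightarrow> 'a \<Rightarrow> 'q) \<Rightarrow> ('q \<Rightarrow> 'q \<Rightarrow> 'q)
     \<Rightarrow> ('q \<Rightarrow> 'q) \<Rightarrow> bool" where
  "based_quantale lact ract mult star \<longleftrightarrow>
     is_locale TYPE('a) \<and> involutive_bi_quantale lact ract mult star"

text \<open>Support; 1_Q is read as the top element of Q.\<close>
definition is_support ::
  "('a::complete_lattice \<Rightarrow> 'q::complete_lattice \<Rightarrow> 'q) \<Rightarrow> ('q \<Rightarrow> 'q \<Rightarrow> 'q) \<Rightarrow> ('q \<Rightarrow> 'q)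
     \<Rightarrow> ('q \<Rightarrow> 'a) \<Rightarrow> bool" where
  "is_support lact mult star supp \<longleftrightarrow>
     (\<forall>X. supp (Sup X) = (SUP x\<in>X. supp x)) \<and>
     supp top = top \<and>
     (\<forall>x y. lact (supp x) y \<le> mult (mult x (star x)) y) \<and>
     (\<forall>x. lact (supp x) x = x)"

definition equivariant ::
  "('a::complete_lattice \<Rightarrow> 'q \<Rightarrow> 'q) \<Rightarrow> ('q \<Rightarrow> 'a) \<Rightarrow> bool" where
  "equivariant lact supp \<longleftrightarrow> (\<forall>a x. supp (lact a x) = inf a (supp x))"

end

theory Submission
  imports Defs
begin

(* Equivariance makes supp x act as the identity on everything x generates on the left:
   since x = supp x \<triangleright> x, also x y = supp x \<triangleright> (x y), hence
   supp (x y) = supp x \<sqinter> supp (x y) \<le> supp x. *)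

lemma based_quantale_mult_lact:
  assumes "based_quantale lact ract mult star"
  shows "mult (lact a x) y = lact a (mult x y)"
  using assms
  unfolding based_quantale_def involutive_bi_quantale_def bi_quantale_def by blast

lemma is_support_lact_self:
  assumes "is_support lact mult star supp"
  shows "lact (supp x) x = x"
  using assms unfolding is_support_def by blast

lemma equivariantD:
  assumes "equivariant lact supp"
  shows "supp (lact a x) = inf a (supp x)"
  using assms unfolding equivariant_def by blast

lemma supp_mult_le_left:
  assumes mult_lact: "\<And>a x y. mult (lact a x) y = lact a (mult x y)"
    and lact_supp_self: "\<And>x. lact (supp x) x = x"
    and "equivariant lact supp"
  shows "supp (mult x y) \<le> supp x"
proof -
  have "mult x y = lact (supp x) (mult x y)"
    by (metis mult_lact lact_supp_self)
  then have "supp (mult x y) = inf (supp x) (supp (mult x y))"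
    by (metis equivariantD[OF \<open>equivariant lact supp\<close>])
  then show ?thesis
    by (metis inf.cobounded1)
qed

theorem lemma3p19:
  fixes lact :: "'a::complete_lattice \<Rightarrow> 'q::complete_lattice \<Rightarrow> 'q"
    and ract :: "'q \<Rightarrow> 'a \<Rightarrow> 'q"
    and mult :: "'q \<Rightarrow> 'q \<Rightarrow> 'q"
    and star :: "'q \<Rightarrow> 'q"
    and supp :: "'q \<Rightarrow> 'a"
  assumes "based_quantale lact ract mult star"
    and "is_support lact mult star supp"
    and "equivariant lact supp"
  shows "\<forall>x y. supp (mult x y) \<le> supp x"
  using supp_mult_le_left[of mult lact supp]
    based_quantale_mult_lact[OF assms(1)] is_support_lact_self[OF assms(2)] assms(3)
  by blast

end
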